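(* The class $\mathbf{RMM}$ is not closed under homomorphisms: there exist a finite alphabet $\Sigma$, a language $L\in\mathbf{RMM}$ over $\Sigma$, and a monoid homomorphism $h:\Sigma^*\to\Sigma^*$ such that $h(L)\notin\mathbf{RMM}$.
   Context: A measure-many quantum finite automaton (MM-QFA) over a finite alphabet $\Sigma$ is a tuple $M=(Q,\Sigma,\{U_\sigma\}_{\sigma\in\Sigma\cup\{\$\}},q_0,Q_{acc},Q_{rej})$, where $Q$ is a finite set of states indexing an orthonormal basis of $\mathbb{C}^Q$, $\$\notin\Sigma$ is an end-marker, each $U_\sigma$ is unitary, $q_0$ is the initial state, and $Q$ is partitioned into $Q_{acc}$, $Q_{rej}$ and non-halting states $Q_{non}$, with orthogonal projections $P_{acc},P_{rej},P_{non}$ onto the corresponding spans. On input $x\in\Sigma^*$ it processes the symbols of $x\$$, maintaining $(\psi,p_{acc},p_{rej})$ initialised to $(|q_0\rangle,0,0)$: on reading $\sigma$, $\psi'=U_\sigma\psi$, $p_{acc}\mathrel{+}=\|P_{acc}\psi'\|^2$, $p_{rej}\mathrel{+}=\|P_{rej}\psi'\|^2$, $\psi\leftarrow P_{non}\psi'$. The acceptance probability $p_M(x)$ is the final $p_{acc}$. $M$ accepts $L$ with bounded error if for some $\lambda$ and $\epsilon>0$, $p_M(x)>\lambda+\epsilon$ for $x\in L$ and $p_M(x)<\lambda-\epsilon$ for $x\notin L$. $\mathbf{RMM}$ is the class of languages accepted by some MM-QFA with bounded error. *)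

theory Defs
  imports Complex_Main
begin

text \<open>The state set Q is represented as
  {0..<n}; states are basis indices, a state vector is a function nat => complex
  (only the entries below n matter), and a matrix is nat => nat => complex.
  Input symbols are Some sigma for sigma in Sigma; the end-marker is None.\<close>

definition unitary_mat :: "nat \<Rightarrow> (nat \<Rightarrow> nat \<Rightarrow> complex) \<Rightarrow> bool" where
  "unitary_mat n U \<longleftrightarrow>
     (\<forall>i<n. \<forall>j<n. (\<Sum>k<n. cnj (U k i) * U k j) = (if i = j then 1 else 0))"

definition mat_apply :: "nat \<Rightarrow> (nat \<Rightarrow> nat \<Rightarrow> complex) \<Rightarrow> (nat \<Rightarrow> complex) \<Rightarrow> (nat \<Rightarrow> complex)" where
  "mat_apply n U \<psi> = (\<lambda>i. if i < n then (\<Sum>j<n. U i j * \<psi> j) else 0)"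

definition proj :: "nat set \<Rightarrow> (nat \<Rightarrow> complex) \<Rightarrow> (nat \<Rightarrow> complex)" where
  "proj S \<psi> = (\<lambda>i. if i \<in> S then \<psi> i else 0)"

definition sqnorm_on :: "nat set \<Rightarrow> (nat \<Rightarrow> complex) \<Rightarrow> real" where
  "sqnorm_on S \<psi> = (\<Sum>i\<in>S. (cmod (\<psi> i))\<^sup>2)"

definition is_mmqfa :: "'a set \<Rightarrow> nat \<Rightarrow> ('a option \<Rightarrow> nat \<Rightarrow> nat \<Rightarrow> complex)
    \<Rightarrow> nat \<Rightarrow> nat set \<Rightarrow> nat set \<Rightarrow> bool" where
  "is_mmqfa \<Sigma> n U q0 Qacc Qrej \<longleftrightarrow>
     q0 < n \<and> Qacc \<subseteq> {0..<n} \<and> Qrej \<subseteq> {0..<n} \<and> Qacc \<inter> Qrej = {} \<and>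
     (\<forall>\<sigma>\<in>\<Sigma>. unitary_mat n (U (Some \<sigma>))) \<and> unitary_mat n (U None)"

definition mmqfa_step :: "nat \<Rightarrow> ('a option \<Rightarrow> nat \<Rightarrow> nat \<Rightarrow> complex) \<Rightarrow> nat set \<Rightarrow> nat set
    \<Rightarrow> (nat \<Rightarrow> complex) \<times> real \<times> real \<Rightarrow> 'a option \<Rightarrow> (nat \<Rightarrow> complex) \<times> real \<times> real" where
  "mmqfa_step n U Qacc Qrej st \<sigma> =
     (let (\<psi>, pa, pr) = st;
          \<psi>' = mat_apply n (U \<sigma>) \<psi>
      in (proj ({0..<n} - Qacc - Qrej) \<psi>',
          pa + sqnorm_on Qacc \<psi>',
          pr + sqnorm_on Qrej \<psi>'))"

definition mmqfa_accept_prob :: "nat \<Rightarrow> ('a option \<Rightarrow> nat \<Rightarrow> nat \<Rightarrow> complex) \<Rightarrow> nat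
    \<Rightarrow> nat set \<Rightarrow> nat set \<Rightarrow> 'a list \<Rightarrow> real" where
  "mmqfa_accept_prob n U q0 Qacc Qrej x =
     fst (snd (foldl (mmqfa_step n U Qacc Qrej)
                     (\<lambda>i. if i = q0 then 1 else 0, 0, 0)
                     (map Some x @ [None])))"

definition RMM :: "'a set \<Rightarrow> 'a list set \<Rightarrow> bool" where
  "RMM \<Sigma> L \<longleftrightarrow> L \<subseteq> lists \<Sigma> \<and>
     (\<exists>n U q0 Qacc Qrej. is_mmqfa \<Sigma> n U q0 Qacc Qrej \<and>
        (\<exists>thr \<epsilon>::real. \<epsilon> > 0 \<and>
           (\<forall>x\<in>lists \<Sigma>.
              (x \<in> L \<longrightarrow> mmqfa_accept_prob n U q0 Qacc Qrej x > thr + \<epsilon>) \<and>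
              (x \<notin> L \<longrightarrow> mmqfa_accept_prob n U q0 Qacc Qrej x < thr - \<epsilon>))))"

definition word_hom :: "'a set \<Rightarrow> ('a list \<Rightarrow> 'a list) \<Rightarrow> bool" where
  "word_hom \<Sigma> h \<longleftrightarrow> h ` lists \<Sigma> \<subseteq> lists \<Sigma> \<and> h [] = [] \<and>
     (\<forall>u\<in>lists \<Sigma>. \<forall>v\<in>lists \<Sigma>. h (u @ v) = h u @ h v)"

end

theory Submission
  imports Defs "HOL-Analysis.L2_Norm"
begin

(* The full language {0,1}* is accepted by a one-state automaton, and its image under the
   homomorphism 0 |-> 0, 1 |-> 10 consists of the words in which every 1 is immediately followed
   by a 0.  Suppose an MM-QFA separated this image with margin eps.  By pigeonhole on the bounded
   entries of the powers of the unitary U_0, some power U_0^d with d >= 1 is close to the identity.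
   Along the words (1 0^d)^i 1, which are not in the image, the non-halting mass decreases and
   stays nonnegative, so for some i appending 0^d halts almost no mass.  Then the state after
   reading 0^d is close to U_0^d applied to the previous state, hence close to that state, and the
   acceptance probabilities of (1 0^d)^i 1 and (1 0^d)^(i+1) differ by less than 2 eps, although
   only the latter word is in the image. *)

definition vnorm :: "nat \<Rightarrow> (nat \<Rightarrow> complex) \<Rightarrow> real" where
  "vnorm n v = L2_set (\<lambda>i. cmod (v i)) {..<n}"

definition supported :: "nat \<Rightarrow> (nat \<Rightarrow> complex) \<Rightarrow> bool" where
  "supported n v \<longleftrightarrow> (\<forall>i\<ge>n. v i = 0)"

lemma sqnorm_on_nonneg: "0 \<le> sqnorm_on S v"
  unfolding sqnorm_on_def by (simp add: sum_nonneg)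

lemma sqnorm_on_mono: "S \<subseteq> {..<n} \<Longrightarrow> sqnorm_on S v \<le> sqnorm_on {..<n} v"
  unfolding sqnorm_on_def by (rule sum_mono2) auto

lemma sqnorm_on_restrict:
  assumes "S \<subseteq> {..<n}"
  shows "sqnorm_on {..<n} (\<lambda>i. if i \<in> S then v i else 0) = sqnorm_on S v"
proof -
  have "sqnorm_on {..<n} (\<lambda>i. if i \<in> S then v i else 0)
      = (\<Sum>i<n. if i \<in> S then (cmod (v i))\<^sup>2 else 0)"
    unfolding sqnorm_on_def by (intro sum.cong) auto
  also have "\<dots> = sqnorm_on S v"
    using assms unfolding sqnorm_on_def by (simp add: sum.inter_restrict[symmetric] Int_absorb1)
  finally show ?thesis .
qed

lemma sqnorm_on_union:
  assumes "A \<subseteq> {..<n}" "B \<subseteq> {..<n}" "A \<inter> B = {}"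
  shows "sqnorm_on (A \<union> B) v = sqnorm_on A v + sqnorm_on B v"
  unfolding sqnorm_on_def
  using assms finite_subset[OF assms(1)] finite_subset[OF assms(2)]
  by (simp add: sum.union_disjoint)

lemma vnorm_eq_sqrt: "vnorm n v = sqrt (sqnorm_on {..<n} v)"
  unfolding vnorm_def L2_set_def sqnorm_on_def by simp

lemma vnorm_nonneg: "0 \<le> vnorm n v"
  unfolding vnorm_def by simp

lemma vnorm_add_le: "vnorm n (\<lambda>i. a i + b i) \<le> vnorm n a + vnorm n b"
proof -
  have "vnorm n (\<lambda>i. a i + b i) \<le> L2_set (\<lambda>i. cmod (a i) + cmod (b i)) {..<n}"
    unfolding vnorm_def by (rule L2_set_mono) (auto intro: norm_triangle_ineq)
  also have "\<dots> \<le> vnorm n a + vnorm n b"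
    unfolding vnorm_def by (rule L2_set_triangle_ineq)
  finally show ?thesis .
qed

lemma vnorm_diff_triangle:
  "vnorm n (\<lambda>i. a i - c i) \<le> vnorm n (\<lambda>i. a i - b i) + vnorm n (\<lambda>i. b i - c i)"
  using vnorm_add_le[of n "\<lambda>i. a i - b i" "\<lambda>i. b i - c i"] by simp

lemma vnorm_diff_commute: "vnorm n (\<lambda>i. a i - b i) = vnorm n (\<lambda>i. b i - a i)"
  unfolding vnorm_def by (simp add: norm_minus_commute)

lemma cmod_le_vnorm: "i < n \<Longrightarrow> cmod (v i) \<le> vnorm n v"
  unfolding vnorm_def by (rule member_le_L2_set) auto

lemma vnorm_le_sum_cmod: "vnorm n v \<le> (\<Sum>i<n. cmod (v i))"
  unfolding vnorm_def by (rule L2_set_le_sum) auto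

lemma mat_apply_diff:
  "mat_apply n U (\<lambda>i. a i - b i) = (\<lambda>i. mat_apply n U a i - mat_apply n U b i)"
  unfolding mat_apply_def by (auto simp: sum_subtractf right_diff_distrib)

lemma unitary_sqnorm_on:
  assumes "unitary_mat n U"
  shows "sqnorm_on {..<n} (mat_apply n U v) = sqnorm_on {..<n} v"
proof -
  have cmod_sq: "complex_of_real ((cmod z)\<^sup>2) = cnj z * z" for z
    by (metis complex_norm_square mult.commute)
  have "complex_of_real (sqnorm_on {..<n} (mat_apply n U v))
      = (\<Sum>i<n. cnj (\<Sum>j<n. U i j * v j) * (\<Sum>k<n. U i k * v k))"
    unfolding sqnorm_on_def mat_apply_def of_real_sum
    by (intro sum.cong refl) (simp only: cmod_sq, simp)
  also have "\<dots> = (\<Sum>i<n. \<Sum>j<n. \<Sum>k<n. cnj (v j) * v k * (cnj (U i j) * U i k))"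
    by (simp add: sum_product algebra_simps) (rule sum.cong[OF refl], rule sum.swap)
  also have "\<dots> = (\<Sum>j<n. \<Sum>k<n. \<Sum>i<n. cnj (v j) * v k * (cnj (U i j) * U i k))"
    by (subst sum.swap, rule sum.cong[OF refl], rule sum.swap)
  also have "\<dots> = (\<Sum>j<n. \<Sum>k<n. cnj (v j) * v k * (if j = k then 1 else 0))"
    using assms unfolding unitary_mat_def by (simp add: sum_distrib_left[symmetric])
  also have "\<dots> = (\<Sum>j<n. cnj (v j) * v j)"
    by (simp add: if_distrib if_distribR sum.delta cong: if_cong)
  also have "\<dots> = complex_of_real (sqnorm_on {..<n} v)"
    unfolding sqnorm_on_def of_real_sum by (simp only: cmod_sq)
  finally show ?thesis
    using of_real_eq_iff by blast
qed

lemma unitary_vnorm: "unitary_mat n U \<Longrightarrow> vnorm n (mat_apply n U v) = vnorm n v"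
  by (simp add: vnorm_eq_sqrt unitary_sqnorm_on)

lemma power2_diff_le_twice:
  fixes a b c :: real
  assumes "0 \<le> a" "a \<le> 1" "0 \<le> b" "b \<le> 1" "a - b \<le> c" "0 \<le> c"
  shows "a\<^sup>2 - b\<^sup>2 \<le> 2 * c"
proof (cases "b \<le> a")
  case True
  have "a\<^sup>2 - b\<^sup>2 = (a - b) * (a + b)"
    by (simp add: power2_eq_square algebra_simps)
  also have "\<dots> \<le> c * 2"
    using True assms by (intro mult_mono) auto
  finally show ?thesis
    by simp
next
  case False
  then have "a\<^sup>2 \<le> b\<^sup>2"
    using assms by (simp add: power_mono)
  then show ?thesis
    using assms by linarith
qed

lemma unitary_sqnorm_on_diff_le:
  assumes "unitary_mat n V" "S \<subseteq> {..<n}" "vnorm n x \<le> 1" "vnorm n y \<le> 1"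
  shows "sqnorm_on S (mat_apply n V x) - sqnorm_on S (mat_apply n V y)
           \<le> 2 * vnorm n (\<lambda>i. x i - y i)"
proof -
  define f where "f z = L2_set (\<lambda>i. cmod (z i)) S" for z
  have f_sq: "sqnorm_on S z = (f z)\<^sup>2" for z
    unfolding f_def L2_set_def sqnorm_on_def by (simp add: sum_nonneg)
  have f_nonneg: "0 \<le> f z" for z
    unfolding f_def by simp
  have f_le: "f z \<le> vnorm n z" for z
    using sqnorm_on_mono[OF assms(2), of z] f_nonneg[of z]
    by (simp add: f_sq vnorm_eq_sqrt real_le_rsqrt)
  let ?x = "mat_apply n V x" and ?y = "mat_apply n V y"
  have "f ?x \<le> f ?y + f (\<lambda>i. ?x i - ?y i)"
    unfolding f_def
    by (rule order_trans[OF L2_set_mono L2_set_triangle_ineq]) (auto simp: norm_triangle_sub)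
  also have "f (\<lambda>i. ?x i - ?y i) \<le> vnorm n (\<lambda>i. x i - y i)"
    using f_le[of "\<lambda>i. ?x i - ?y i"] unitary_vnorm[OF assms(1), of "\<lambda>i. x i - y i"]
    by (simp add: mat_apply_diff)
  finally have "f ?x - f ?y \<le> vnorm n (\<lambda>i. x i - y i)"
    by simp
  moreover have "f ?x \<le> 1" "f ?y \<le> 1"
    using f_le[of ?x] f_le[of ?y] unitary_vnorm[OF assms(1)] assms(3,4) by (metis order_trans)+
  ultimately show ?thesis
    unfolding f_sq using f_nonneg vnorm_nonneg by (intro power2_diff_le_twice)
qed

definition mat_mult :: "nat \<Rightarrow> (nat \<Rightarrow> nat \<Rightarrow> complex) \<Rightarrow> (nat \<Rightarrow> nat \<Rightarrow> complex)
    \<Rightarrow> (nat \<Rightarrow> nat \<Rightarrow> complex)" where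
  "mat_mult n A B = (\<lambda>i j. \<Sum>k<n. A i k * B k j)"

primrec mat_pow :: "nat \<Rightarrow> (nat \<Rightarrow> nat \<Rightarrow> complex) \<Rightarrow> nat \<Rightarrow> (nat \<Rightarrow> nat \<Rightarrow> complex)" where
  "mat_pow n A 0 = (\<lambda>i j. if i = j then 1 else 0)"
| "mat_pow n A (Suc k) = mat_mult n A (mat_pow n A k)"

lemma mat_apply_mat_mult: "mat_apply n A (mat_apply n B v) = mat_apply n (mat_mult n A B) v"
proof -
  have "(\<Sum>k<n. A i k * (\<Sum>j<n. B k j * v j)) = (\<Sum>j<n. (\<Sum>k<n. A i k * B k j) * v j)" for i
    by (simp add: sum_distrib_left sum_distrib_right mult.assoc) (rule sum.swap)
  then show ?thesis
    unfolding mat_apply_def mat_mult_def by (auto simp: fun_eq_iff)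
qed

lemma mat_apply_one: "supported n v \<Longrightarrow> mat_apply n (\<lambda>i j. if i = j then 1 else 0) v = v"
  unfolding mat_apply_def supported_def by (auto simp: fun_eq_iff if_distrib if_distribR sum.delta cong: if_cong)

lemma funpow_mat_apply: "supported n v \<Longrightarrow> (mat_apply n A ^^ k) v = mat_apply n (mat_pow n A k) v"
  by (induction k) (simp_all add: mat_apply_one mat_apply_mat_mult)

lemma funpow_mat_apply_diff:
  "(mat_apply n A ^^ k) (\<lambda>i. a i - b i) = (\<lambda>i. (mat_apply n A ^^ k) a i - (mat_apply n A ^^ k) b i)"
  by (induction k) (simp_all add: mat_apply_diff)

lemma unitary_vnorm_funpow: "unitary_mat n A \<Longrightarrow> vnorm n ((mat_apply n A ^^ k) v) = vnorm n v"
  by (induction k) (simp_all add: unitary_vnorm)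

lemma unitary_mat_pow_entry_le:
  assumes "unitary_mat n A" "i < n" "l < n"
  shows "cmod (mat_pow n A k i l) \<le> 1"
proof -
  define e :: "nat \<Rightarrow> complex" where "e = (\<lambda>j. if j = l then 1 else 0)"
  have "supported n e"
    using assms(3) by (auto simp: supported_def e_def)
  have "vnorm n e = 1"
    using sqnorm_on_restrict[of "{l}" n "\<lambda>_. 1"] assms(3)
    by (simp add: vnorm_eq_sqrt sqnorm_on_def e_def)
  have "mat_pow n A k i l = mat_apply n (mat_pow n A k) e i"
    using assms(2,3) unfolding mat_apply_def e_def by (simp add: if_distrib if_distribR sum.delta cong: if_cong)
  also have "\<dots> = (mat_apply n A ^^ k) e i"
    using funpow_mat_apply[OF \<open>supported n e\<close>] by simp
  finally have "cmod (mat_pow n A k i l) \<le> vnorm n ((mat_apply n A ^^ k) e)"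
    using cmod_le_vnorm[OF assms(2)] by simp
  also have "\<dots> = 1"
    using unitary_vnorm_funpow[OF assms(1)] \<open>vnorm n e = 1\<close> by simp
  finally show ?thesis .
qed

lemma floor_mult_in_range:
  fixes x :: real
  assumes "\<bar>x\<bar> \<le> 1"
  shows "\<lfloor>real K * x\<rfloor> \<in> {- int K..int K}"
proof -
  have "- real K \<le> real K * x" "real K * x \<le> real K"
    using assms mult_left_mono[of "-1" x "real K"] mult_left_mono[of x 1 "real K"] by auto
  then show ?thesis
    by (auto simp: le_floor_iff floor_le_iff)
qed

lemma floor_mult_eq_imp_close:
  fixes x y :: real
  assumes "K > 0" "\<lfloor>real K * x\<rfloor> = \<lfloor>real K * y\<rfloor>"
  shows "\<bar>x - y\<bar> < 1 / real K"
proof -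
  have "\<bar>real K * x - real K * y\<bar> < 1"
    using assms(2) by linarith
  then have "real K * \<bar>x - y\<bar> < 1"
    by (simp add: abs_mult right_diff_distrib[symmetric])
  then show ?thesis
    using assms(1) by (simp add: field_simps)
qed

lemma bounded_matrices_pigeonhole:
  fixes M :: "nat \<Rightarrow> nat \<Rightarrow> nat \<Rightarrow> complex"
  assumes bounded: "\<And>k a b. a < n \<Longrightarrow> b < n \<Longrightarrow> cmod (M k a b) \<le> 1" and "K > 0"
  shows "\<exists>i j. i < j \<and> (\<forall>a<n. \<forall>b<n. cmod (M j a b - M i a b) \<le> 2 / real K)"
proof -
  \<comment> \<open>\<open>cell k\<close> rounds the entries of \<open>M k\<close> to the grid \<open>(1/K)(\<int> + i\<int>)\<close>; there are only
      finitely many cells, so two indices share one.\<close>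
  define cell where "cell k = (\<lambda>(a, b). if a < n \<and> b < n then
      (\<lfloor>real K * Re (M k a b)\<rfloor>, \<lfloor>real K * Im (M k a b)\<rfloor>) else (0, 0))" for k
  define F where "F = {f. \<forall>x. (x \<in> {..<n} \<times> {..<n} \<longrightarrow> f x \<in> {- int K..int K} \<times> {- int K..int K})
                          \<and> (x \<notin> {..<n} \<times> {..<n} \<longrightarrow> f x = (0, 0))}"
  have "finite F"
    unfolding F_def by (rule finite_set_of_finite_funs) auto
  have "cell k \<in> F" for k
  proof -
    have "\<bar>Re (M k a b)\<bar> \<le> 1 \<and> \<bar>Im (M k a b)\<bar> \<le> 1" if "a < n" "b < n" for a b
      using bounded[OF that] abs_Re_le_cmod abs_Im_le_cmod order_trans by blast
    then show ?thesis
      unfolding F_def cell_def using floor_mult_in_range by auto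
  qed
  then have "\<not> inj cell"
    using \<open>finite F\<close> finite_imageD[of cell UNIV] finite_subset[of "range cell" F] by auto
  then obtain i0 j0 where "i0 \<noteq> j0" "cell i0 = cell j0"
    unfolding inj_def by blast
  then obtain i j where "i < j" "cell i = cell j"
    by (cases "i0 < j0") (auto dest: sym[of "cell i0"] simp: not_less_iff_gr_or_eq)
  moreover have "cmod (M j a b - M i a b) \<le> 2 / real K" if "a < n" "b < n" "cell i = cell j" for i j a b
  proof -
    have "cell i (a, b) = cell j (a, b)"
      using that(3) by simp
    then have "\<lfloor>real K * Re (M j a b)\<rfloor> = \<lfloor>real K * Re (M i a b)\<rfloor>"
        "\<lfloor>real K * Im (M j a b)\<rfloor> = \<lfloor>real K * Im (M i a b)\<rfloor>"
      using that(1,2) unfolding cell_def by auto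
    then have "\<bar>Re (M j a b) - Re (M i a b)\<bar> < 1 / real K"
        "\<bar>Im (M j a b) - Im (M i a b)\<bar> < 1 / real K"
      using floor_mult_eq_imp_close[OF \<open>K > 0\<close>] by blast+
    then show ?thesis
      using cmod_le[of "M j a b - M i a b"] by simp
  qed
  ultimately show ?thesis
    by blast
qed

lemma vnorm_mat_apply_le:
  assumes entries: "\<And>a b. a < n \<Longrightarrow> b < n \<Longrightarrow> cmod (B a b) \<le> c" and "vnorm n v \<le> 1"
  shows "vnorm n (mat_apply n B v) \<le> real n * real n * c"
proof -
  have "cmod (mat_apply n B v t) \<le> real n * c" if "t < n" for t
  proof -
    have "cmod (mat_apply n B v t) \<le> (\<Sum>b<n. cmod (B t b) * cmod (v b))"
      using that unfolding mat_apply_def by (simp add: sum_norm_le norm_mult)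
    also have "\<dots> \<le> (\<Sum>b<n. c * 1)"
    proof (rule sum_mono)
      fix b assume "b \<in> {..<n}"
      then have "cmod (B t b) \<le> c" "cmod (v b) \<le> 1"
        using entries[OF that] cmod_le_vnorm[of b n v] assms(2) by auto
      moreover have "0 \<le> c"
        using norm_ge_zero[of "B t b"] \<open>cmod (B t b) \<le> c\<close> by linarith
      ultimately show "cmod (B t b) * cmod (v b) \<le> c * 1"
        by (intro mult_mono) auto
    qed
    finally show ?thesis
      by simp
  qed
  then have "(\<Sum>t<n. cmod (mat_apply n B v t)) \<le> (\<Sum>t<n. real n * c)"
    by (intro sum_mono) simp
  then show ?thesis
    using vnorm_le_sum_cmod[of n "mat_apply n B v"] by simp
qed

lemma unitary_recurrence:
  assumes "unitary_mat n A" "\<delta> > 0"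
  shows "\<exists>d\<ge>1. \<forall>v. supported n v \<longrightarrow> vnorm n v \<le> 1 \<longrightarrow>
           vnorm n (\<lambda>t. (mat_apply n A ^^ d) v t - v t) \<le> \<delta>"
proof -
  define K :: nat where "K = nat \<lceil>2 * real n * real n / \<delta>\<rceil> + 1"
  have "K > 0" "2 * real n * real n / \<delta> \<le> real K"
    unfolding K_def by linarith+
  then have "real n * real n * (2 / real K) \<le> \<delta>"
    using assms(2) by (simp add: pos_divide_le_eq mult.commute)
  have "\<exists>i j. i < j \<and> (\<forall>a<n. \<forall>b<n. cmod (mat_pow n A j a b - mat_pow n A i a b) \<le> 2 / real K)"
    using unitary_mat_pow_entry_le[OF assms(1)] \<open>K > 0\<close> by (rule bounded_matrices_pigeonhole)
  then obtain i j where "i < j"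
    and close: "\<forall>a<n. \<forall>b<n. cmod (mat_pow n A j a b - mat_pow n A i a b) \<le> 2 / real K"
    by blast
  define d where "d = j - i"
  have "d \<ge> 1" "j = i + d"
    using \<open>i < j\<close> unfolding d_def by simp_all
  show ?thesis
  proof (intro exI[of _ d] conjI allI impI \<open>d \<ge> 1\<close>)
    fix v assume "supported n v" "vnorm n v \<le> 1"
    let ?P = "\<lambda>k. mat_apply n A ^^ k"
    \<comment> \<open>Applying the isometry \<open>A\<^sup>i\<close> turns \<open>A\<^sup>d v - v\<close> into \<open>A\<^sup>j v - A\<^sup>i v\<close>.\<close>
    have "vnorm n (\<lambda>t. ?P d v t - v t) = vnorm n (?P i (\<lambda>t. ?P d v t - v t))"
      using unitary_vnorm_funpow[OF assms(1)] by simp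
    also have "?P i (\<lambda>t. ?P d v t - v t) = (\<lambda>t. ?P j v t - ?P i v t)"
      unfolding funpow_mat_apply_diff \<open>j = i + d\<close> funpow_add by simp
    also have "\<dots> = mat_apply n (\<lambda>a b. mat_pow n A j a b - mat_pow n A i a b) v"
      using funpow_mat_apply[OF \<open>supported n v\<close>]
      by (auto simp: mat_apply_def fun_eq_iff sum_subtractf left_diff_distrib)
    also have "vnorm n \<dots> \<le> real n * real n * (2 / real K)"
      using close \<open>vnorm n v \<le> 1\<close> by (intro vnorm_mat_apply_le) auto
    finally show "vnorm n (\<lambda>t. ?P d v t - v t) \<le> \<delta>"
      using \<open>real n * real n * (2 / real K) \<le> \<delta>\<close> by linarith
  qed
qed

lemma bounded_below_small_decrement:
  fixes c :: "nat \<Rightarrow> real"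
  assumes "\<And>k. m \<le> c k" "\<eta> > 0"
  shows "\<exists>i. c i - c (Suc i) < \<eta>"
proof (rule ccontr)
  assume "\<nexists>i. c i - c (Suc i) < \<eta>"
  then have step: "c (Suc i) \<le> c i - \<eta>" for i
    by (simp add: not_less) (metis le_diff_eq add.commute)
  have decrease: "c k \<le> c 0 - real k * \<eta>" for k
  proof (induction k)
    case (Suc k)
    then show ?case
      using step[of k] by (simp add: algebra_simps)
  qed simp
  obtain k where "(c 0 - m) / \<eta> < real k"
    using reals_Archimedean2 by blast
  then have "c 0 - m < real k * \<eta>"
    using assms(2) by (simp add: pos_divide_less_eq)
  then show False
    using decrease[of k] assms(1)[of k] by linarith
qed

definition pump_word :: "'a \<Rightarrow> 'a \<Rightarrow> nat \<Rightarrow> nat \<Rightarrow> 'a list" where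
  "pump_word a b d i = concat (replicate i (b # replicate d a)) @ [b]"

lemma concat_replicate_Suc_snoc: "concat (replicate (Suc i) xs) = concat (replicate i xs) @ xs"
  by (simp add: replicate_append_same[symmetric])

lemma pump_word_Suc: "pump_word a b d (Suc i) = pump_word a b d i @ replicate d a @ [b]"
  unfolding pump_word_def concat_replicate_Suc_snoc by simp

lemma add_mult_sqrt_less:
  fixes x \<epsilon> :: real
  assumes "0 \<le> x" "x \<le> 1" "x < (\<epsilon> / (2 * real d + 2))\<^sup>2" "\<epsilon> > 0"
  shows "x + 2 * real d * sqrt x < \<epsilon>"
proof -
  have "x \<le> sqrt x"
    using assms(1,2) real_sqrt_le_mono[of x 1] mult_right_le_one_le[of "sqrt x" "sqrt x"] by simp
  moreover have "sqrt x < \<epsilon> / (2 * real d + 2)"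
    using assms real_sqrt_less_mono[of x "(\<epsilon> / (2 * real d + 2))\<^sup>2"] by simp
  then have "(2 * real d + 2) * sqrt x < \<epsilon>"
    by (simp add: pos_less_divide_eq mult.commute)
  ultimately show ?thesis
    using real_sqrt_ge_zero[OF assms(1)] by (simp add: algebra_simps)
qed

lemma pump_word_in_lists: "a \<in> \<Sigma> \<Longrightarrow> b \<in> \<Sigma> \<Longrightarrow> pump_word a b d i \<in> lists \<Sigma>"
  unfolding pump_word_def by (auto split: if_splits)

locale mmqfa =
  fixes \<Sigma> :: "'a set" and n :: nat and U :: "'a option \<Rightarrow> nat \<Rightarrow> nat \<Rightarrow> complex"
    and q0 :: nat and Qacc Qrej :: "nat set"
  assumes is_mmqfa: "is_mmqfa \<Sigma> n U q0 Qacc Qrej"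
begin

abbreviation accept_prob :: "'a list \<Rightarrow> real" where
  "accept_prob \<equiv> mmqfa_accept_prob n U q0 Qacc Qrej"

definition Qnon :: "nat set" where
  "Qnon = {0..<n} - Qacc - Qrej"

definition run :: "'a list \<Rightarrow> (nat \<Rightarrow> complex) \<times> real \<times> real" where
  "run w = foldl (mmqfa_step n U Qacc Qrej) (\<lambda>i. if i = q0 then 1 else 0, 0, 0) (map Some w)"

abbreviation state :: "'a list \<Rightarrow> nat \<Rightarrow> complex" where
  "state w \<equiv> fst (run w)"

definition live_mass :: "'a list \<Rightarrow> real" where
  "live_mass w = sqnorm_on {..<n} (state w)"

definition acc_mass :: "'a list \<Rightarrow> real" where
  "acc_mass w = fst (snd (run w))"

definition rej_mass :: "'a list \<Rightarrow> real" where
  "rej_mass w = snd (snd (run w))"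

lemma Qacc_subset: "Qacc \<subseteq> {..<n}"
  and Qrej_subset: "Qrej \<subseteq> {..<n}"
  and Qacc_Qrej_disjoint: "Qacc \<inter> Qrej = {}"
  and q0_less: "q0 < n"
  using is_mmqfa unfolding is_mmqfa_def by auto

lemma Qnon_subset: "Qnon \<subseteq> {..<n}"
  unfolding Qnon_def by auto

lemma unitary_letter: "\<sigma> \<in> \<Sigma> \<Longrightarrow> unitary_mat n (U (Some \<sigma>))"
  and unitary_end_marker: "unitary_mat n (U None)"
  using is_mmqfa unfolding is_mmqfa_def by auto

lemma mmqfa_step_eq:
  "mmqfa_step n U Qacc Qrej (\<psi>, pa, pr) \<sigma> =
     (proj Qnon (mat_apply n (U \<sigma>) \<psi>), pa + sqnorm_on Qacc (mat_apply n (U \<sigma>) \<psi>),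
      pr + sqnorm_on Qrej (mat_apply n (U \<sigma>) \<psi>))"
  unfolding mmqfa_step_def Qnon_def by (simp add: Let_def)

lemma run_snoc: "run (w @ [\<sigma>]) = mmqfa_step n U Qacc Qrej (run w) (Some \<sigma>)"
  unfolding run_def by simp

lemma accept_prob_eq:
  "accept_prob w = acc_mass w + sqnorm_on Qacc (mat_apply n (U None) (state w))"
  unfolding mmqfa_accept_prob_def acc_mass_def run_def
  by (simp add: mmqfa_step_def Let_def split: prod.splits)

lemma supported_state: "supported n (state w)"
proof (induction w rule: rev_induct)
  case Nil
  then show ?case
    using q0_less by (simp add: run_def supported_def)
next
  case (snoc \<sigma> w)
  then show ?case
    using Qnon_subset
    by (cases "run w") (auto simp: run_snoc mmqfa_step_eq supported_def proj_def)
qed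

lemma halted_sqnorm:
  "sqnorm_on {..<n} (\<lambda>i. mat_apply n V \<psi> i - proj Qnon (mat_apply n V \<psi>) i)
     = sqnorm_on Qacc (mat_apply n V \<psi>) + sqnorm_on Qrej (mat_apply n V \<psi>)"
proof -
  have "(\<lambda>i. mat_apply n V \<psi> i - proj Qnon (mat_apply n V \<psi>) i)
      = (\<lambda>i. if i \<in> Qacc \<union> Qrej then mat_apply n V \<psi> i else 0)"
    using Qacc_subset Qrej_subset unfolding proj_def Qnon_def mat_apply_def by (auto simp: fun_eq_iff)
  then show ?thesis
    using sqnorm_on_restrict[of "Qacc \<union> Qrej" n] Qacc_subset Qrej_subset
      sqnorm_on_union[OF Qacc_subset Qrej_subset Qacc_Qrej_disjoint] by simp
qed

lemma step_mass_conservation: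
  assumes "unitary_mat n V"
  shows "sqnorm_on {..<n} (proj Qnon (mat_apply n V \<psi>))
           + sqnorm_on Qacc (mat_apply n V \<psi>) + sqnorm_on Qrej (mat_apply n V \<psi>)
         = sqnorm_on {..<n} \<psi>"
proof -
  have "{..<n} = (Qacc \<union> Qrej) \<union> Qnon" "(Qacc \<union> Qrej) \<inter> Qnon = {}"
    using Qacc_subset Qrej_subset unfolding Qnon_def by auto
  then have "sqnorm_on {..<n} (mat_apply n V \<psi>)
      = sqnorm_on Qacc (mat_apply n V \<psi>) + sqnorm_on Qrej (mat_apply n V \<psi>)
        + sqnorm_on Qnon (mat_apply n V \<psi>)"
    using sqnorm_on_union[of "Qacc \<union> Qrej" n Qnon] sqnorm_on_union[OF Qacc_subset Qrej_subset Qacc_Qrej_disjoint]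
      Qacc_subset Qrej_subset Qnon_subset by auto
  then show ?thesis
    using unitary_sqnorm_on[OF assms] sqnorm_on_restrict[OF Qnon_subset]
    unfolding proj_def by simp
qed

lemma mass_conservation: "w \<in> lists \<Sigma> \<Longrightarrow> live_mass w + acc_mass w + rej_mass w = 1"
proof (induction w rule: rev_induct)
  case Nil
  have "sqnorm_on {..<n} (\<lambda>i. if i = q0 then 1 else 0 :: complex) = 1"
    using sqnorm_on_restrict[of "{q0}" n "\<lambda>_. 1"] q0_less by (simp add: sqnorm_on_def)
  then show ?case
    by (simp add: live_mass_def acc_mass_def rej_mass_def run_def)
next
  case (snoc \<sigma> w)
  then show ?case
    using step_mass_conservation[OF unitary_letter, of \<sigma> "state w"]
    by (cases "run w") (auto simp: live_mass_def acc_mass_def rej_mass_def run_snoc mmqfa_step_eq)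
qed

lemma halted_mass_mono: "acc_mass w \<le> acc_mass (w @ u) \<and> rej_mass w \<le> rej_mass (w @ u)"
proof (induction u rule: rev_induct)
  case (snoc \<sigma> u)
  obtain \<psi> pa pr where "run (w @ u) = (\<psi>, pa, pr)"
    by (cases "run (w @ u)")
  then show ?case
    using snoc.IH run_snoc[of "w @ u" \<sigma>]
    by (auto simp: acc_mass_def rej_mass_def mmqfa_step_eq intro: add_increasing2 sqnorm_on_nonneg)
qed simp

lemma live_mass_antimono: "w @ u \<in> lists \<Sigma> \<Longrightarrow> live_mass (w @ u) \<le> live_mass w"
  using mass_conservation[of w] mass_conservation[of "w @ u"] halted_mass_mono[of w u] by auto

lemma live_mass_nonneg: "0 \<le> live_mass w"
  unfolding live_mass_def by (rule sqnorm_on_nonneg)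

lemma live_mass_le_1: "w \<in> lists \<Sigma> \<Longrightarrow> live_mass w \<le> 1"
  using live_mass_antimono[of "[]" w] mass_conservation[of "[]"]
  by (simp add: acc_mass_def rej_mass_def run_def)

lemma vnorm_state_le_1: "w \<in> lists \<Sigma> \<Longrightarrow> vnorm n (state w) \<le> 1"
  using live_mass_le_1 by (simp add: vnorm_eq_sqrt live_mass_def)

lemma acc_mass_gain_le:
  "w @ u \<in> lists \<Sigma> \<Longrightarrow> acc_mass (w @ u) - acc_mass w \<le> live_mass w - live_mass (w @ u)"
  using mass_conservation[of w] mass_conservation[of "w @ u"] halted_mass_mono[of w u] by auto

lemma state_replicate_deviation:
  assumes "\<sigma> \<in> \<Sigma>" "w @ replicate k \<sigma> \<in> lists \<Sigma>"
  shows "vnorm n (\<lambda>i. (mat_apply n (U (Some \<sigma>)) ^^ k) (state w) i - state (w @ replicate k \<sigma>) i)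
           \<le> real k * sqrt (live_mass w - live_mass (w @ replicate k \<sigma>))"
  using assms(2)
proof (induction k)
  case 0
  then show ?case
    by (simp add: vnorm_def L2_set_0')
next
  case (Suc k)
  let ?W = "mat_apply n (U (Some \<sigma>))"
  let ?a = "(?W ^^ k) (state w)"
  define v where "v = w @ replicate k \<sigma>"
  have v_snoc: "w @ replicate (Suc k) \<sigma> = v @ [\<sigma>]"
    unfolding v_def by (simp add: replicate_append_same[symmetric])
  then have "v \<in> lists \<Sigma>" "v @ [\<sigma>] \<in> lists \<Sigma>"
    using Suc.prems by auto
  obtain \<psi> pa pr where run_v: "run v = (\<psi>, pa, pr)"
    by (cases "run v")
  then have state_snoc: "state (v @ [\<sigma>]) = proj Qnon (?W \<psi>)"
    by (simp add: run_snoc mmqfa_step_eq)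
  have "vnorm n (\<lambda>i. (?W ^^ Suc k) (state w) i - state (v @ [\<sigma>]) i)
      \<le> vnorm n (\<lambda>i. ?W ?a i - ?W \<psi> i) + vnorm n (\<lambda>i. ?W \<psi> i - proj Qnon (?W \<psi>) i)"
    using vnorm_add_le[of n "\<lambda>i. ?W ?a i - ?W \<psi> i" "\<lambda>i. ?W \<psi> i - proj Qnon (?W \<psi>) i"] state_snoc
    by simp
  moreover have "vnorm n (\<lambda>i. ?W ?a i - ?W \<psi> i) \<le> real k * sqrt (live_mass w - live_mass v)"
    using unitary_vnorm[OF unitary_letter[OF assms(1)], of "\<lambda>i. ?a i - \<psi> i"]
      Suc.IH \<open>v \<in> lists \<Sigma>\<close> run_v
    by (simp add: mat_apply_diff v_def)
  \<comment> \<open>A step deviates from the free evolution by the halted part, whose squared norm is the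
      mass halted in that step.\<close>
  moreover have "vnorm n (\<lambda>i. ?W \<psi> i - proj Qnon (?W \<psi>) i) = sqrt (live_mass v - live_mass (v @ [\<sigma>]))"
    using halted_sqnorm[of "U (Some \<sigma>)" \<psi>] step_mass_conservation[OF unitary_letter[OF assms(1)], of \<psi>]
      run_v state_snoc
    by (simp add: vnorm_eq_sqrt live_mass_def)
  moreover have "real k * sqrt (live_mass w - live_mass v) + sqrt (live_mass v - live_mass (v @ [\<sigma>]))
      \<le> real (Suc k) * sqrt (live_mass w - live_mass (v @ [\<sigma>]))"
  proof -
    have "live_mass (v @ [\<sigma>]) \<le> live_mass v" "live_mass v \<le> live_mass w"
      using live_mass_antimono \<open>v @ [\<sigma>] \<in> lists \<Sigma>\<close> \<open>v \<in> lists \<Sigma>\<close> unfolding v_def by blast+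
    then have "sqrt (live_mass w - live_mass v) \<le> sqrt (live_mass w - live_mass (v @ [\<sigma>]))"
        "sqrt (live_mass v - live_mass (v @ [\<sigma>])) \<le> sqrt (live_mass w - live_mass (v @ [\<sigma>]))"
      by simp_all
    moreover from this(1) have "real k * sqrt (live_mass w - live_mass v)
        \<le> real k * sqrt (live_mass w - live_mass (v @ [\<sigma>]))"
      by (rule mult_left_mono) simp
    ultimately show ?thesis
      unfolding of_nat_Suc distrib_right by linarith
  qed
  ultimately show ?case
    unfolding v_snoc by linarith
qed

lemma accept_prob_pumped_le:
  assumes "a \<in> \<Sigma>" "w @ replicate d a \<in> lists \<Sigma>"
    and "vnorm n (\<lambda>i. (mat_apply n (U (Some a)) ^^ d) (state w) i - state w i) \<le> \<delta>"
  defines "\<Delta> \<equiv> live_mass w - live_mass (w @ replicate d a)"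
  shows "accept_prob (w @ replicate d a) - accept_prob w \<le> \<Delta> + 2 * real d * sqrt \<Delta> + 2 * \<delta>"
proof -
  let ?v = "w @ replicate d a"
  have "w \<in> lists \<Sigma>"
    using assms(2) by simp
  have "vnorm n (\<lambda>i. state ?v i - state w i) \<le> real d * sqrt \<Delta> + \<delta>"
    using vnorm_diff_triangle[where n = n and a = "state ?v" and b = "(mat_apply n (U (Some a)) ^^ d) (state w)"
        and c = "state w"]
      vnorm_diff_commute[of n "state ?v" "(mat_apply n (U (Some a)) ^^ d) (state w)"]
      state_replicate_deviation[OF assms(1,2)] assms(3)
    unfolding \<Delta>_def by linarith
  moreover have "sqnorm_on Qacc (mat_apply n (U None) (state ?v)) - sqnorm_on Qacc (mat_apply n (U None) (state w))
      \<le> 2 * vnorm n (\<lambda>i. state ?v i - state w i)"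
    using unitary_sqnorm_on_diff_le[OF unitary_end_marker Qacc_subset]
      vnorm_state_le_1[OF assms(2)] vnorm_state_le_1[OF \<open>w \<in> lists \<Sigma>\<close>] by blast
  moreover have "acc_mass ?v - acc_mass w \<le> \<Delta>"
    using acc_mass_gain_le assms(2) unfolding \<Delta>_def by blast
  ultimately show ?thesis
    using accept_prob_eq[of ?v] accept_prob_eq[of w] by linarith
qed

lemma pumping_contradicts_bounded_error:
  assumes "a \<in> \<Sigma>" "b \<in> \<Sigma>" "\<epsilon> > 0"
    and separates: "\<And>x. x \<in> lists \<Sigma> \<Longrightarrow>
      (x \<in> L \<longrightarrow> accept_prob x > thr + \<epsilon>) \<and> (x \<notin> L \<longrightarrow> accept_prob x < thr - \<epsilon>)"
    and pumping: "\<And>d i. d \<ge> 1 \<Longrightarrow> pump_word a b d i \<notin> L \<and> pump_word a b d i @ replicate d a \<in> L"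
  shows False
proof -
  obtain d where "d \<ge> 1" and recur: "\<forall>v. supported n v \<longrightarrow> vnorm n v \<le> 1 \<longrightarrow>
      vnorm n (\<lambda>t. (mat_apply n (U (Some a)) ^^ d) v t - v t) \<le> \<epsilon> / 2"
    using unitary_recurrence[OF unitary_letter[OF assms(1)], of "\<epsilon> / 2"] assms(3) by auto
  define \<eta> where "\<eta> = (\<epsilon> / (2 * real d + 2))\<^sup>2"
  have "\<eta> > 0"
    using assms(3) by (simp add: \<eta>_def)
  obtain i where small: "live_mass (pump_word a b d i) - live_mass (pump_word a b d (Suc i)) < \<eta>"
    using bounded_below_small_decrement[OF live_mass_nonneg \<open>\<eta> > 0\<close>] by blast
  define w where "w = pump_word a b d i"
  define \<Delta> where "\<Delta> = live_mass w - live_mass (w @ replicate d a)"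
  have lists: "w \<in> lists \<Sigma>" "w @ replicate d a \<in> lists \<Sigma>" "w @ replicate d a @ [b] \<in> lists \<Sigma>"
    using pump_word_in_lists[OF assms(1,2), of d i] pump_word_in_lists[OF assms(1,2), of d "Suc i"]
    unfolding w_def pump_word_Suc by auto
  have "0 \<le> \<Delta>" "\<Delta> \<le> 1"
    using live_mass_antimono[OF lists(2)] live_mass_le_1[OF lists(1)]
      live_mass_nonneg[of "w @ replicate d a"]
    unfolding \<Delta>_def by linarith+
  have "\<Delta> < \<eta>"
    using small live_mass_antimono[of "w @ replicate d a" "[b]"] lists(3)
    unfolding \<Delta>_def w_def pump_word_Suc by simp
  have "\<Delta> + 2 * real d * sqrt \<Delta> < \<epsilon>"
    using \<open>0 \<le> \<Delta>\<close> \<open>\<Delta> \<le> 1\<close> \<open>\<Delta> < \<eta>\<close> assms(3) unfolding \<eta>_def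
    by (rule add_mult_sqrt_less)
  moreover have "accept_prob (w @ replicate d a) - accept_prob w \<le> \<Delta> + 2 * real d * sqrt \<Delta> + 2 * (\<epsilon> / 2)"
    using accept_prob_pumped_le[OF assms(1) lists(2)] recur supported_state vnorm_state_le_1[OF lists(1)]
    unfolding \<Delta>_def by blast
  moreover have "accept_prob w < thr - \<epsilon>" "thr + \<epsilon> < accept_prob (w @ replicate d a)"
    using separates lists pumping[OF \<open>d \<ge> 1\<close>, of i] unfolding w_def by auto
  ultimately show False
    by linarith
qed

end

lemma not_RMM_if_pumping:
  assumes "a \<in> \<Sigma>" "b \<in> \<Sigma>"
    and "\<And>d i. d \<ge> 1 \<Longrightarrow> pump_word a b d i \<notin> L \<and> pump_word a b d i @ replicate d a \<in> L"
  shows "\<not> RMM \<Sigma> L"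
proof
  assume "RMM \<Sigma> L"
  then obtain n U q0 Qacc Qrej thr \<epsilon> where "is_mmqfa \<Sigma> n U q0 Qacc Qrej" "\<epsilon> > 0"
    and separates: "\<forall>x\<in>lists \<Sigma>. (x \<in> L \<longrightarrow> mmqfa_accept_prob n U q0 Qacc Qrej x > thr + \<epsilon>)
      \<and> (x \<notin> L \<longrightarrow> mmqfa_accept_prob n U q0 Qacc Qrej x < thr - \<epsilon>)"
    unfolding RMM_def by blast
  then interpret mmqfa \<Sigma> n U q0 Qacc Qrej
    by unfold_locales
  show False
    by (rule pumping_contradicts_bounded_error[where L = L and thr = thr, OF assms(1,2) \<open>\<epsilon> > 0\<close>])
      (use separates assms(3) in auto)
qed

lemma RMM_all_words: "RMM \<Sigma> (lists \<Sigma>)"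
proof -
  \<comment> \<open>A single accepting state: the first symbol read, or the end-marker, accepts with
      probability 1.\<close>
  define U :: "'a option \<Rightarrow> nat \<Rightarrow> nat \<Rightarrow> complex" where "U = (\<lambda>_ _ _. 1)"
  have "is_mmqfa \<Sigma> 1 U 0 {0} {}"
    unfolding is_mmqfa_def unitary_mat_def U_def by simp
  have step: "mmqfa_step 1 U {0} {} (\<psi>, pa, pr) \<sigma> = (\<lambda>_. 0, pa + (cmod (\<psi> 0))\<^sup>2, pr)" for \<psi> pa pr \<sigma>
    unfolding mmqfa_step_def mat_apply_def proj_def sqnorm_on_def U_def by (simp add: fun_eq_iff)
  have halted: "foldl (mmqfa_step 1 U {0} {}) (\<lambda>_. 0, 1, 0) ys = (\<lambda>_. 0, 1, 0)" for ys
    by (induction ys) (simp_all add: step del: One_nat_def)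
  have "mmqfa_accept_prob 1 U 0 {0} {} x = 1" for x
  proof -
    obtain \<sigma> ys where "map Some x @ [None] = \<sigma> # ys"
      by (cases "map Some x @ [None]") auto
    then show ?thesis
      unfolding mmqfa_accept_prob_def by (simp add: step halted del: One_nat_def)
  qed
  then show ?thesis
    unfolding RMM_def using \<open>is_mmqfa \<Sigma> 1 U 0 {0} {}\<close>
    by (intro conjI subset_refl exI[of _ 1] exI[of _ U] exI[of _ 0] exI[of _ "{0}"] exI[of _ "{}"]
        exI[of _ "1 / 2"] exI[of _ "1 / 4"]) auto
qed

definition one_to_ten :: "nat list \<Rightarrow> nat list" where
  "one_to_ten x = concat (map (\<lambda>c. if c = 0 then [0] else [1, 0]) x)"

lemma word_hom_one_to_ten: "word_hom {0, 1} one_to_ten"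
  unfolding word_hom_def one_to_ten_def by (auto split: if_splits)

lemma last_one_to_ten: "one_to_ten x \<noteq> [] \<Longrightarrow> last (one_to_ten x) = 0"
  by (induction x) (auto simp: one_to_ten_def)

lemma one_to_ten_concat_replicate:
  "one_to_ten (concat (replicate k x)) = concat (replicate k (one_to_ten x))"
  by (induction k) (simp_all add: one_to_ten_def)

lemma pump_word_notin_range_one_to_ten: "pump_word (0::nat) 1 d i \<notin> range one_to_ten"
proof
  assume "pump_word 0 1 d i \<in> range one_to_ten"
  then obtain x where "one_to_ten x = pump_word 0 1 d i"
    by auto
  then have "one_to_ten x \<noteq> []" "last (one_to_ten x) = 1"
    by (simp_all add: pump_word_def)
  then show False
    using last_one_to_ten by simp
qed

lemma pump_word_append_in_one_to_ten_image:
  assumes "d \<ge> 1"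
  shows "pump_word 0 1 d i @ replicate d 0 \<in> one_to_ten ` lists {0, 1}"
proof -
  have "one_to_ten (1 # replicate (d - 1) 0) = 1 # replicate d 0"
    using assms by (induction d) (auto simp: one_to_ten_def)
  have "pump_word 0 1 d i @ replicate d 0 = concat (replicate (Suc i) (1 # replicate d 0))"
    unfolding pump_word_def concat_replicate_Suc_snoc by simp
  also have "\<dots> = one_to_ten (concat (replicate (Suc i) (1 # replicate (d - 1) 0)))"
    unfolding one_to_ten_concat_replicate \<open>one_to_ten (1 # replicate (d - 1) 0) = 1 # replicate d 0\<close> ..
  finally show ?thesis
    by (rule image_eqI) (auto split: if_splits)
qed

theorem theorem4p2:
  shows "\<exists>(\<Sigma>::nat set) (L::nat list set) (h::nat list \<Rightarrow> nat list).
           finite \<Sigma> \<and> RMM \<Sigma> L \<and> word_hom \<Sigma> h \<and> \<not> RMM \<Sigma> (h ` L)"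
proof (intro exI conjI)
  show "finite {0, 1::nat}"
    by simp
  show "RMM {0, 1::nat} (lists {0, 1})"
    by (rule RMM_all_words)
  show "word_hom {0, 1} one_to_ten"
    by (rule word_hom_one_to_ten)
  show "\<not> RMM {0, 1} (one_to_ten ` lists {0, 1})"
    using pump_word_notin_range_one_to_ten pump_word_append_in_one_to_ten_image
    by (intro not_RMM_if_pumping[of 0 _ 1]) blast+
qed

end
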